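(* Let $\mathcal L\subseteq\mathfrak P(S)$ be an algebraic lattice of sets and let $c$ be a closure operation on $\mathcal L$. Then $$\mathrm{Cl}^\mathrm{cons}(\{F^c\mid F\in\mathcal L_\mathrm{fin}\})=\mathrm{Cl}^\mathrm{cons}(\mathcal L^c)=\mathcal L^{c_f},$$ closures being taken in $\mathcal L$ with the constructible topology.
   Context: $S$ is a nonempty set. An algebraic lattice of sets is a family $\mathcal L\subseteq\mathfrak P(S)$ closed under arbitrary intersections and nonempty up-directed unions. For $F\subseteq S$ let $\langle F\rangle$ be the intersection of all members of $\mathcal L$ containing $F$; $A\in\mathcal L$ is finitely generated if $A=\langle F\rangle$ for a finite $F$, and $\mathcal L_\mathrm{fin}$ is the set of such. A closure operation on $\mathcal L$ is a map $c:\mathcal L\to\mathcal L$, $A\mapsto A^c$, with $A\subseteq A^c$, $A\subseteq B\Rightarrow A^c\subseteq B^c$, $(A^c)^c=A^c$. Its finite-type associate is $A^{c_f}:=\bigcup\{F^c\mid F\in\mathcal L_\mathrm{fin},\ F\subseteq A\}$. For a closure $d$, $\mathcal L^d:=\{A\in\mathcal L\mid A^d=A\}$. The Zariski topology on $\mathcal L$ has basis $\{A\in\mathcal L\mid G\subseteq A\}$, $G\subseteq S$ finite; it is spectral, and the constructible topology is the coarsest topology in which all its open quasi-compact sets are clopen. *)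

theory Defs
  imports "HOL-Analysis.Analysis"
begin

text \<open>Algebraic lattice of sets on the ground set S: closed under arbitrary
  intersections (the empty intersection being S) and nonempty up-directed unions.\<close>
definition algebraic_lattice :: "'a set \<Rightarrow> 'a set set \<Rightarrow> bool" where
  "algebraic_lattice S L \<longleftrightarrow>
     L \<subseteq> Pow S \<and>
     (\<forall>K \<subseteq> L. S \<inter> \<Inter>K \<in> L) \<and>
     (\<forall>K \<subseteq> L. K \<noteq> {} \<and> (\<forall>A\<in>K. \<forall>B\<in>K. \<exists>C\<in>K. A \<union> B \<subseteq> C) \<longrightarrow> \<Union>K \<in> L)"

definition gen :: "'a set \<Rightarrow> 'a set set \<Rightarrow> 'a set \<Rightarrow> 'a set" where
  "gen S L F = S \<inter> \<Inter>{A \<in> L. F \<subseteq> A}"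

definition Lfin :: "'a set \<Rightarrow> 'a set set \<Rightarrow> 'a set set" where
  "Lfin S L = {A \<in> L. \<exists>F. finite F \<and> F \<subseteq> S \<and> A = gen S L F}"

definition closure_operation :: "'a set set \<Rightarrow> ('a set \<Rightarrow> 'a set) \<Rightarrow> bool" where
  "closure_operation L c \<longleftrightarrow>
     (\<forall>A\<in>L. c A \<in> L \<and> A \<subseteq> c A \<and> c (c A) = c A) \<and>
     (\<forall>A\<in>L. \<forall>B\<in>L. A \<subseteq> B \<longrightarrow> c A \<subseteq> c B)"

definition finite_type_assoc :: "'a set \<Rightarrow> 'a set set \<Rightarrow> ('a set \<Rightarrow> 'a set) \<Rightarrow> 'a set \<Rightarrow> 'a set" where
  "finite_type_assoc S L c A = \<Union>{c F | F. F \<in> Lfin S L \<and> F \<subseteq> A}"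

definition fixed_sets :: "'a set set \<Rightarrow> ('a set \<Rightarrow> 'a set) \<Rightarrow> 'a set set" where
  "fixed_sets L d = {A \<in> L. d A = A}"

definition zariski :: "'a set \<Rightarrow> 'a set set \<Rightarrow> 'a set topology" where
  "zariski S L = topology_generated_by {{A \<in> L. G \<subseteq> A} | G. finite G \<and> G \<subseteq> S}"

definition constructible :: "'a set \<Rightarrow> 'a set set \<Rightarrow> 'a set topology" where
  "constructible S L = topology_generated_by
     ({U. openin (zariski S L) U \<and> compactin (zariski S L) U} \<union>
      {L - U | U. openin (zariski S L) U \<and> compactin (zariski S L) U})"

end

(*
  Compact Zariski-open sets are finite unions of basic opens {B. G \<subseteq> B} (G finite), so the
  patches {B. G \<subseteq> B, Y \<inter> B = {}} with G, Y finite form a neighbourhood base of the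
  constructible topology. The condition "c_f A = A" is closed: a witness y \<in> c<G> - A with
  G \<subseteq> A persists on the whole patch G \<subseteq> B, y \<notin> B. Conversely, if c_f A = A, G \<subseteq> A and
  Y \<inter> A = {}, then c<G> \<subseteq> A lies in the same patch as A, so the sets F^c are dense in
  the c_f-closed sets. Since F^c \<in> L^c \<subseteq> L^(c_f), all three sets have the same closure.
*)
theory Submission
  imports Defs
begin

lemma gen_in_lattice:
  assumes "algebraic_lattice S L"
  shows "gen S L G \<in> L"
proof -
  have "{A \<in> L. G \<subseteq> A} \<subseteq> L" by blast
  then show ?thesis
    using assms unfolding algebraic_lattice_def gen_def by blast
qed

lemma algebraic_lattice_subset_Pow: "algebraic_lattice S L \<Longrightarrow> L \<subseteq> Pow S"
  by (simp add: algebraic_lattice_def)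

lemma subset_gen: "G \<subseteq> S \<Longrightarrow> G \<subseteq> gen S L G"
  unfolding gen_def by blast

lemma gen_least: "A \<in> L \<Longrightarrow> G \<subseteq> A \<Longrightarrow> gen S L G \<subseteq> A"
  unfolding gen_def by blast

lemma gen_in_Lfin:
  assumes "algebraic_lattice S L" "finite G" "G \<subseteq> S"
  shows "gen S L G \<in> Lfin S L"
  unfolding Lfin_def using gen_in_lattice[OF assms(1)] assms(2,3) by blast

lemma Lfin_subset: "Lfin S L \<subseteq> L"
  unfolding Lfin_def by blast

lemma closure_operationD:
  assumes "closure_operation L c" "A \<in> L"
  shows "c A \<in> L" "A \<subseteq> c A" "c (c A) = c A" "B \<in> L \<Longrightarrow> B \<subseteq> A \<Longrightarrow> c B \<subseteq> c A"
  using assms unfolding closure_operation_def by blast+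

lemma mem_finite_type_assoc:
  "x \<in> finite_type_assoc S L c A \<longleftrightarrow> (\<exists>F\<in>Lfin S L. F \<subseteq> A \<and> x \<in> c F)"
  unfolding finite_type_assoc_def by blast

lemma openin_zariski_basic_nbhd:
  assumes "openin (zariski S L) U" "A \<in> U"
  obtains G where "finite G" "G \<subseteq> S" "G \<subseteq> A" "{B \<in> L. G \<subseteq> B} \<subseteq> U"
proof -
  have "generate_topology_on {{A \<in> L. G \<subseteq> A} | G. finite G \<and> G \<subseteq> S} U"
    using assms(1) by (simp add: zariski_def openin_topology_generated_by_iff)
  then have "\<exists>G. finite G \<and> G \<subseteq> S \<and> G \<subseteq> A \<and> {B \<in> L. G \<subseteq> B} \<subseteq> U"
    using assms(2)
  proof (induction arbitrary: A rule: generate_topology_on.induct)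
    case Empty
    then show ?case by simp
  next
    case (Int U V)
    then obtain G H where "finite G" "G \<subseteq> S" "G \<subseteq> A" "{B \<in> L. G \<subseteq> B} \<subseteq> U"
      and "finite H" "H \<subseteq> S" "H \<subseteq> A" "{B \<in> L. H \<subseteq> B} \<subseteq> V"
      by (meson IntD1 IntD2)
    then show ?case by (intro exI[of _ "G \<union> H"]) auto
  next
    case (UN K)
    then show ?case by (meson UnionE Union_upper order_trans)
  next
    case (Basis s)
    then show ?case by auto
  qed
  then show ?thesis using that by blast
qed

lemma topspace_zariski: "topspace (zariski S L) = L"
  unfolding zariski_def topology_generated_by_topspace by auto

lemma openin_zariski_basic:
  assumes "finite G" "G \<subseteq> S"
  shows "openin (zariski S L) {B \<in> L. G \<subseteq> B}"
  unfolding zariski_def openin_topology_generated_by_iff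
  by (rule generate_topology_on.Basis) (use assms in auto)

text \<open>Every open set containing the generic point \<^term>\<open>gen S L G\<close> contains all of
  \<^term>\<open>{B \<in> L. G \<subseteq> B}\<close>, so one member of an open cover suffices.\<close>
lemma compactin_zariski_basic:
  assumes "algebraic_lattice S L" "finite G" "G \<subseteq> S"
  shows "compactin (zariski S L) {B \<in> L. G \<subseteq> B}"
  unfolding compactin_def
proof (intro conjI allI impI)
  show "{B \<in> L. G \<subseteq> B} \<subseteq> topspace (zariski S L)"
    by (auto simp: topspace_zariski)
  fix \<U> assume \<U>: "(\<forall>V\<in>\<U>. openin (zariski S L) V) \<and> {B \<in> L. G \<subseteq> B} \<subseteq> \<Union>\<U>"
  have "gen S L G \<in> {B \<in> L. G \<subseteq> B}"
    using gen_in_lattice[OF assms(1)] subset_gen[OF assms(3)] by blast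
  then obtain V where V: "V \<in> \<U>" "gen S L G \<in> V" using \<U> by blast
  then have "openin (zariski S L) V" using \<U> by blast
  then obtain H where "finite H" "H \<subseteq> S" "H \<subseteq> gen S L G" "{B \<in> L. H \<subseteq> B} \<subseteq> V"
    using V(2) by (rule openin_zariski_basic_nbhd)
  then have "{B \<in> L. G \<subseteq> B} \<subseteq> V"
    using gen_least[of _ L G S] by blast
  then show "\<exists>\<F>. finite \<F> \<and> \<F> \<subseteq> \<U> \<and> {B \<in> L. G \<subseteq> B} \<subseteq> \<Union>\<F>"
    using V by (intro exI[of _ "{V}"]) auto
qed

lemma compactin_zariski_finite_Union:
  assumes "openin (zariski S L) U" "compactin (zariski S L) U"
  obtains \<G> where "finite \<G>" "U = (\<Union>G\<in>\<G>. {B \<in> L. G \<subseteq> B})"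
proof -
  define \<U> where "\<U> = {{B \<in> L. G \<subseteq> B} | G. finite G \<and> G \<subseteq> S \<and> {B \<in> L. G \<subseteq> B} \<subseteq> U}"
  have "\<forall>W\<in>\<U>. openin (zariski S L) W"
    unfolding \<U>_def using openin_zariski_basic by blast
  moreover have "U \<subseteq> \<Union>\<U>"
  proof
    fix A assume "A \<in> U"
    with assms(1) obtain G where "finite G" "G \<subseteq> S" "G \<subseteq> A" "{B \<in> L. G \<subseteq> B} \<subseteq> U"
      by (rule openin_zariski_basic_nbhd)
    moreover have "A \<in> L"
      using \<open>A \<in> U\<close> assms(1) openin_subset topspace_zariski by blast
    ultimately show "A \<in> \<Union>\<U>" unfolding \<U>_def by blast
  qed
  ultimately obtain \<F> where \<F>: "finite \<F>" "\<F> \<subseteq> \<U>" "U \<subseteq> \<Union>\<F>"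
    using assms(2) unfolding compactin_def by meson
  then have "\<forall>W\<in>\<F>. \<exists>G. W = {B \<in> L. G \<subseteq> B}"
    unfolding \<U>_def by blast
  then obtain g where g: "\<forall>W\<in>\<F>. W = {B \<in> L. g W \<subseteq> B}"
    by metis
  have "U = (\<Union>G\<in>g ` \<F>. {B \<in> L. G \<subseteq> B})"
  proof -
    have "\<Union>\<F> \<subseteq> U" using \<F>(2) unfolding \<U>_def by blast
    then show ?thesis using \<F>(3) g by auto
  qed
  then show ?thesis using that \<F>(1) by blast
qed

lemma zariski_compact_open_complement_nbhd:
  assumes "openin (zariski S L) U" "compactin (zariski S L) U" "A \<in> L - U"
  obtains Y where "finite Y" "Y \<inter> A = {}" "{B \<in> L. Y \<inter> B = {}} \<subseteq> L - U"
proof -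
  obtain \<G> where \<G>: "finite \<G>" "U = (\<Union>G\<in>\<G>. {B \<in> L. G \<subseteq> B})"
    using compactin_zariski_finite_Union[OF assms(1,2)] .
  have "\<forall>G\<in>\<G>. \<exists>y. y \<in> G - A"
    using assms(3) \<G>(2) by blast
  then obtain y where y: "\<forall>G\<in>\<G>. y G \<in> G - A"
    by metis
  show ?thesis
  proof (rule that[of "y ` \<G>"])
    show "finite (y ` \<G>)" using \<G>(1) by simp
    show "y ` \<G> \<inter> A = {}" using y by blast
    show "{B \<in> L. y ` \<G> \<inter> B = {}} \<subseteq> L - U" using y \<G>(2) by blast
  qed
qed

lemma topspace_constructible: "topspace (constructible S L) = L"
proof -
  have "openin (zariski S L) U \<Longrightarrow> U \<subseteq> L" for U
    using openin_subset topspace_zariski by metis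
  moreover have "L = L - {}" "openin (zariski S L) {}" "compactin (zariski S L) {}"
    by auto
  ultimately show ?thesis
    unfolding constructible_def topology_generated_by_topspace by blast
qed

lemma openin_constructible_compact_open:
  assumes "openin (zariski S L) U" "compactin (zariski S L) U"
  shows "openin (constructible S L) U" "openin (constructible S L) (L - U)"
  using assms unfolding constructible_def openin_topology_generated_by_iff
  by (auto intro: generate_topology_on.Basis)

lemma openin_constructible_patch:
  assumes "algebraic_lattice S L" "finite G" "G \<subseteq> S" "finite Y" "Y \<subseteq> S"
  shows "openin (constructible S L) {B \<in> L. G \<subseteq> B \<and> Y \<inter> B = {}}"
  using assms(4,5)
proof (induction Y rule: finite_induct)
  case empty
  show ?case
    using openin_constructible_compact_open(1)[OF openin_zariski_basic[OF assms(2,3)]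
        compactin_zariski_basic[OF assms(1-3)]]
    by simp
next
  case (insert y Y)
  have "{y} \<subseteq> S" using insert.prems by simp
  then have "openin (constructible S L) (L - {B \<in> L. {y} \<subseteq> B})"
    by (intro openin_constructible_compact_open(2) openin_zariski_basic
        compactin_zariski_basic[OF assms(1)]) simp_all
  moreover have "{B \<in> L. G \<subseteq> B \<and> insert y Y \<inter> B = {}}
      = {B \<in> L. G \<subseteq> B \<and> Y \<inter> B = {}} \<inter> (L - {B \<in> L. {y} \<subseteq> B})"
    by blast
  ultimately show ?case
    using insert by (simp add: openin_Int)
qed

lemma openin_constructible_patch_nbhd:
  assumes "openin (constructible S L) V" "A \<in> V"
  obtains G Y where "finite G" "finite Y" "G \<subseteq> A" "Y \<inter> A = {}"
    "{B \<in> L. G \<subseteq> B \<and> Y \<inter> B = {}} \<subseteq> V"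
proof -
  have "generate_topology_on ({U. openin (zariski S L) U \<and> compactin (zariski S L) U} \<union>
      {L - U | U. openin (zariski S L) U \<and> compactin (zariski S L) U}) V"
    using assms(1) by (simp add: constructible_def openin_topology_generated_by_iff)
  then have "\<exists>G Y. finite G \<and> finite Y \<and> G \<subseteq> A \<and> Y \<inter> A = {} \<and>
      {B \<in> L. G \<subseteq> B \<and> Y \<inter> B = {}} \<subseteq> V"
    using assms(2)
  proof (induction arbitrary: A rule: generate_topology_on.induct)
    case Empty
    then show ?case by simp
  next
    case (Int U V)
    then obtain G Y G' Y' where
      "finite G" "finite Y" "G \<subseteq> A" "Y \<inter> A = {}" "{B \<in> L. G \<subseteq> B \<and> Y \<inter> B = {}} \<subseteq> U"
      "finite G'" "finite Y'" "G' \<subseteq> A" "Y' \<inter> A = {}" "{B \<in> L. G' \<subseteq> B \<and> Y' \<inter> B = {}} \<subseteq> V"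
      by (meson IntD1 IntD2)
    then show ?case by (intro exI[of _ "G \<union> G'"] exI[of _ "Y \<union> Y'"]) auto
  next
    case (UN K)
    then show ?case by (meson UnionE Union_upper order_trans)
  next
    case (Basis W)
    then consider "openin (zariski S L) W"
      | U where "W = L - U" "openin (zariski S L) U" "compactin (zariski S L) U"
      by blast
    then show ?case
    proof cases
      case 1
      then obtain G where "finite G" "G \<subseteq> S" "G \<subseteq> A" "{B \<in> L. G \<subseteq> B} \<subseteq> W"
        using Basis.prems by (rule openin_zariski_basic_nbhd)
      then show ?thesis by (intro exI[of _ G] exI[of _ "{}"]) auto
    next
      case 2
      then have "A \<in> L - U" using Basis.prems by simp
      then obtain Y where "finite Y" "Y \<inter> A = {}" "{B \<in> L. Y \<inter> B = {}} \<subseteq> W"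
        using zariski_compact_open_complement_nbhd[OF 2(2,3)] 2(1) by blast
      then show ?thesis by (intro exI[of _ "{}"] exI[of _ Y]) auto
    qed
  qed
  then show ?thesis using that by blast
qed

lemma subset_finite_type_assoc:
  assumes "algebraic_lattice S L" "closure_operation L c" "A \<in> L"
  shows "A \<subseteq> finite_type_assoc S L c A"
proof
  fix x assume "x \<in> A"
  then have x: "{x} \<subseteq> S"
    using algebraic_lattice_subset_Pow[OF assms(1)] assms(3) by blast
  have "gen S L {x} \<in> Lfin S L"
    using gen_in_Lfin[OF assms(1) _ x] by simp
  moreover have "gen S L {x} \<subseteq> A"
    using gen_least[OF assms(3)] \<open>x \<in> A\<close> by simp
  moreover have "x \<in> c (gen S L {x})"
    using subset_gen[OF x] closure_operationD(2)[OF assms(2) gen_in_lattice[OF assms(1)]]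
    by blast
  ultimately show "x \<in> finite_type_assoc S L c A"
    unfolding mem_finite_type_assoc by blast
qed

lemma finite_type_assoc_subset:
  assumes "closure_operation L c" "A \<in> L"
  shows "finite_type_assoc S L c A \<subseteq> c A"
  using closure_operationD(4)[OF assms] Lfin_subset
  unfolding finite_type_assoc_def by blast

lemma fixed_sets_subset_fixed_sets_finite_type_assoc:
  assumes "algebraic_lattice S L" "closure_operation L c"
  shows "fixed_sets L c \<subseteq> fixed_sets L (finite_type_assoc S L c)"
  using subset_finite_type_assoc[OF assms] finite_type_assoc_subset[OF assms(2)]
  unfolding fixed_sets_def by fastforce

lemma closedin_constructible_fixed_sets_finite_type_assoc:
  assumes "algebraic_lattice S L" "closure_operation L c"
  shows "closedin (constructible S L) (fixed_sets L (finite_type_assoc S L c))"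
  unfolding closedin_def topspace_constructible
proof (intro conjI)
  show "fixed_sets L (finite_type_assoc S L c) \<subseteq> L"
    unfolding fixed_sets_def by blast
  show "openin (constructible S L) (L - fixed_sets L (finite_type_assoc S L c))"
  proof (subst openin_subopen, intro ballI)
    fix A assume A: "A \<in> L - fixed_sets L (finite_type_assoc S L c)"
    then obtain y where y: "y \<in> finite_type_assoc S L c A" "y \<notin> A"
      using subset_finite_type_assoc[OF assms] unfolding fixed_sets_def by blast
    then obtain F where F: "F \<in> Lfin S L" "F \<subseteq> A" "y \<in> c F"
      unfolding mem_finite_type_assoc by blast
    then obtain G where G: "finite G" "G \<subseteq> S" "F = gen S L G"
      unfolding Lfin_def by blast
    have "F \<in> L" using F(1) Lfin_subset by blast
    then have "y \<in> S"
      using F(3) closure_operationD(1)[OF assms(2)] algebraic_lattice_subset_Pow[OF assms(1)]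
      by blast
    let ?N = "{B \<in> L. G \<subseteq> B \<and> {y} \<inter> B = {}}"
    have "openin (constructible S L) ?N"
      by (rule openin_constructible_patch[OF assms(1) G(1,2)]) (use \<open>y \<in> S\<close> in simp_all)
    moreover have "A \<in> ?N"
      using A F(2) G subset_gen y(2) by blast
    moreover have "?N \<subseteq> L - fixed_sets L (finite_type_assoc S L c)"
    proof
      fix B assume B: "B \<in> ?N"
      then have "y \<in> finite_type_assoc S L c B"
        using F(1,3) G(3) gen_least[of B L G S] unfolding mem_finite_type_assoc by blast
      then show "B \<in> L - fixed_sets L (finite_type_assoc S L c)"
        using B unfolding fixed_sets_def by auto
    qed
    ultimately show "\<exists>T. openin (constructible S L) T \<and> A \<in> T \<and>
        T \<subseteq> L - fixed_sets L (finite_type_assoc S L c)"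
      by blast
  qed
qed

lemma fixed_sets_finite_type_assoc_subset_closure_of:
  assumes "algebraic_lattice S L" "closure_operation L c"
  shows "fixed_sets L (finite_type_assoc S L c)
           \<subseteq> constructible S L closure_of {c F | F. F \<in> Lfin S L}"
proof
  fix A assume "A \<in> fixed_sets L (finite_type_assoc S L c)"
  then have A: "A \<in> L" "finite_type_assoc S L c A = A"
    unfolding fixed_sets_def by auto
  show "A \<in> constructible S L closure_of {c F | F. F \<in> Lfin S L}"
    unfolding in_closure_of topspace_constructible
  proof (intro conjI allI impI)
    show "A \<in> L" using A(1) .
    fix V assume "A \<in> V \<and> openin (constructible S L) V"
    then obtain G Y where GY: "finite G" "finite Y" "G \<subseteq> A" "Y \<inter> A = {}"
      "{B \<in> L. G \<subseteq> B \<and> Y \<inter> B = {}} \<subseteq> V"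
      by (auto elim: openin_constructible_patch_nbhd)
    have "G \<subseteq> S"
      using GY(3) A(1) algebraic_lattice_subset_Pow[OF assms(1)] by blast
    define F where "F = gen S L G"
    have F: "F \<in> Lfin S L" "F \<subseteq> A" "G \<subseteq> F"
      unfolding F_def using gen_in_Lfin[OF assms(1) GY(1) \<open>G \<subseteq> S\<close>]
        gen_least[OF A(1) GY(3)] subset_gen[OF \<open>G \<subseteq> S\<close>] by auto
    txt \<open>\<^term>\<open>c F\<close> lies between \<^term>\<open>G\<close> and \<^term>\<open>A\<close>,
      hence in the same patch as \<^term>\<open>A\<close>.\<close>
    have "c F \<subseteq> A"
      using F(1,2) A(2) unfolding finite_type_assoc_def by blast
    moreover have "G \<subseteq> c F" "c F \<in> L"
      using F(1,3) Lfin_subset closure_operationD(1,2)[OF assms(2), of F] by blast+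
    ultimately have "c F \<in> V"
      using GY(4,5) by blast
    then show "\<exists>X. X \<in> {c F | F. F \<in> Lfin S L} \<and> X \<in> V"
      using F(1) by blast
  qed
qed

theorem proposition4p5:
  fixes S :: "'a set" and L :: "'a set set" and c :: "'a set \<Rightarrow> 'a set"
  assumes "S \<noteq> {}"
    and "algebraic_lattice S L"
    and "closure_operation L c"
  shows "constructible S L closure_of {c F | F. F \<in> Lfin S L}
           = constructible S L closure_of (fixed_sets L c)
      \<and> constructible S L closure_of (fixed_sets L c)
           = fixed_sets L (finite_type_assoc S L c)"
proof -
  let ?T = "constructible S L"
  have "{c F | F. F \<in> Lfin S L} \<subseteq> fixed_sets L c"
    using Lfin_subset closure_operationD(1,3)[OF assms(3)] unfolding fixed_sets_def by blast
  then have generators: "?T closure_of {c F | F. F \<in> Lfin S L} \<subseteq> ?T closure_of (fixed_sets L c)"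
    by (rule closure_of_mono)
  have fixed: "?T closure_of (fixed_sets L c) \<subseteq> fixed_sets L (finite_type_assoc S L c)"
    using fixed_sets_subset_fixed_sets_finite_type_assoc[OF assms(2,3)]
      closedin_constructible_fixed_sets_finite_type_assoc[OF assms(2,3)]
    by (rule closure_of_minimal)
  have dense: "fixed_sets L (finite_type_assoc S L c) \<subseteq> ?T closure_of {c F | F. F \<in> Lfin S L}"
    using fixed_sets_finite_type_assoc_subset_closure_of[OF assms(2,3)] .
  show ?thesis
    using generators fixed dense by blast
qed

end
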